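(* Consider the quadratic form $x\mapsto B_1(x,d_{uv},d_{v0},L)$ on $\mathbb R^4$, identified with a symmetric $4\times4$ matrix. Two of its four eigenvalues are nonnegative for all $d_{uv},d_{v0},L$; the other two do not have a definite sign. Let $\lambda_1^b(d_{uv},d_{v0},L)$ denote its smallest eigenvalue and set $$\upsilon:=e^{-2\pi\delta_b/L},\qquad \zeta:=\frac{d_{uv}}{d_{uv}+d_{v0}}=\frac{c_u+c_v}{c_0+c_u+2c_v}.$$ Then $\lambda_1^b(d_{uv},d_{v0},L)\ge0$ if and only if $\zeta\ge\zeta_1(\upsilon)$, where $\zeta_1$, defined on $(0,1)$ by $$\zeta_1(\upsilon)=\frac{1}{8\log^3\upsilon}\Big(9-12\upsilon^2+3\upsilon^4+4\log\upsilon\,(3+\log^2\upsilon)+\sqrt{R(\upsilon)}\Big),$$ $$R(\upsilon)=225-504\upsilon^2+342\upsilon^4-72\upsilon^6+9\upsilon^8+(360-288\upsilon^2-72\upsilon^4)\log\upsilon+144\log^2\upsilon+(-120+96\upsilon^2+24\upsilon^4)\log^3\upsilon-96\log^4\upsilon+16\log^6\upsilon,$$ extends to a continuous function on $[0,1]$.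
   Context: Let $L>0$ and $c_0,c_u,c_v\ge0$, not all zero; $d_{uv}:=c_u+c_v$, $d_{v0}:=c_v+c_0$, $\delta_b:=\big(\tfrac34(c_0+c_u+2c_v)\big)^{1/3}$. For $x\in\mathbb R^4$, $B_1(x,d_{uv},d_{v0},L):=\frac{4\pi^2}{L^2}[d_{uv}(x_1^2+x_3^2)+d_{v0}(x_2^2+x_4^2)]+\frac{L}{\pi}\big[2(1-\frac{2\pi\delta_b}{L})(x_1^2+x_3^2)+\frac12(x_2^2+x_4^2)-2(x_1x_2+x_3x_4)e^{-2\pi\delta_b/L}+4x_1x_3e^{-4\pi\delta_b/L}-2(x_1x_4+x_2x_3)e^{-6\pi\delta_b/L}+x_2x_4e^{-8\pi\delta_b/L}\big]$. *)

theory Defs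
  imports "HOL-Analysis.Analysis"
begin

definition delta_b :: "real \<Rightarrow> real \<Rightarrow> real \<Rightarrow> real" where
  "delta_b c0 cu cv = ((3/4) * (c0 + cu + 2*cv)) powr (1/3)"

definition B1 :: "real \<Rightarrow> real \<Rightarrow> real \<Rightarrow> real \<Rightarrow> real^4 \<Rightarrow> real" where
  "B1 c0 cu cv L x =
    (let duv = cu + cv; dv0 = cv + c0; d = delta_b c0 cu cv;
         x1 = x$1; x2 = x$2; x3 = x$3; x4 = x$4 in
     4 * pi^2 / L^2 * (duv * (x1^2 + x3^2) + dv0 * (x2^2 + x4^2))
     + L / pi * (2 * (1 - 2*pi*d/L) * (x1^2 + x3^2) + 1/2 * (x2^2 + x4^2)
        - 2 * (x1*x2 + x3*x4) * exp (-2*pi*d/L)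
        + 4 * x1 * x3 * exp (-4*pi*d/L)
        - 2 * (x1*x4 + x2*x3) * exp (-6*pi*d/L)
        + x2 * x4 * exp (-8*pi*d/L)))"

text \<open>The symmetric matrix associated to a quadratic form (by polarization),
  so that x^T M x = Q x.\<close>
definition quad_matrix :: "(real^4 \<Rightarrow> real) \<Rightarrow> real^4^4" where
  "quad_matrix Q = (\<chi> i j. (Q (axis i 1 + axis j 1) - Q (axis i 1) - Q (axis j 1)) / 2)"

definition is_eigenvalue :: "real^'n^'n \<Rightarrow> real \<Rightarrow> bool" where
  "is_eigenvalue A mu \<longleftrightarrow> (\<exists>v. v \<noteq> 0 \<and> A *v v = mu *\<^sub>R v)"

definition smallest_eigenvalue :: "real^'n^'n \<Rightarrow> real" where
  "smallest_eigenvalue A = Min {mu. is_eigenvalue A mu}"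

definition R_fun :: "real \<Rightarrow> real" where
  "R_fun u = (let l = ln u in
     225 - 504*u^2 + 342*u^4 - 72*u^6 + 9*u^8 + (360 - 288*u^2 - 72*u^4) * l
     + 144 * l^2 + (-120 + 96*u^2 + 24*u^4) * l^3 - 96 * l^4 + 16 * l^6)"

definition zeta1 :: "real \<Rightarrow> real" where
  "zeta1 u = (let l = ln u in
     1 / (8 * l^3) * (9 - 12*u^2 + 3*u^4 + 4 * l * (3 + l^2) + sqrt (R_fun u)))"

end

theory Submission
  imports Defs "HOL-Real_Asymp.Real_Asymp"
begin

text \<open>The form B_1 is invariant under swapping (x1, x2) with (x3, x4), so its matrix leaves the
  vectors (x, y, x, y) and (x, y, -x, -y) invariant and splits into two symmetric 2x2 blocks. In units
  of L/pi the even block is the odd block plus the positive semidefinite rank-one matrix v v^T with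
  v = (2 upsilon, -upsilon^2), so the smallest eigenvalue is nonnegative exactly when the odd block is
  positive semidefinite. Writing t = 2 pi delta_b / L and k = 2 t^3 / 3, the odd block is
  [[k zeta + alpha, gamma], [gamma, k (1 - zeta) + beta]], whose determinant is a concave quadratic
  in k zeta. By the inequality tanh t >= t - t^3/3 it is nonnegative at k zeta = k, so the block is
  positive semidefinite iff k zeta is at least the smaller root, which is k zeta_1(upsilon).
  Continuity of the extension of zeta_1 at 0 and 1 is a matter of asymptotic expansion.\<close>

(* [[a, b], [b, c]] is positive semidefinite, by the trace and determinant criterion *)
definition psd2 :: "real \<Rightarrow> real \<Rightarrow> real \<Rightarrow> bool" where
  "psd2 a b c \<longleftrightarrow> 0 \<le> a + c \<and> b\<^sup>2 \<le> a * c"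

lemma psd2_iff_smaller_root_nonneg:
  "0 \<le> (a + c - sqrt ((a - c)\<^sup>2 + 4 * b\<^sup>2)) / 2 \<longleftrightarrow> psd2 a b c"
proof -
  have "0 \<le> (a + c - sqrt ((a - c)\<^sup>2 + 4 * b\<^sup>2)) / 2 \<longleftrightarrow> sqrt ((a - c)\<^sup>2 + 4 * b\<^sup>2) \<le> a + c"
    by simp
  also have "\<dots> \<longleftrightarrow> 0 \<le> a + c \<and> (a - c)\<^sup>2 + 4 * b\<^sup>2 \<le> (a + c)\<^sup>2"
  proof
    assume le: "sqrt ((a - c)\<^sup>2 + 4 * b\<^sup>2) \<le> a + c"
    have "0 \<le> sqrt ((a - c)\<^sup>2 + 4 * b\<^sup>2)"
      by simp
    with le have "0 \<le> a + c"
      by linarith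
    with le show "0 \<le> a + c \<and> (a - c)\<^sup>2 + 4 * b\<^sup>2 \<le> (a + c)\<^sup>2"
      using power_mono[OF le, of 2] by simp
  next
    assume "0 \<le> a + c \<and> (a - c)\<^sup>2 + 4 * b\<^sup>2 \<le> (a + c)\<^sup>2"
    then show "sqrt ((a - c)\<^sup>2 + 4 * b\<^sup>2) \<le> a + c"
      using real_sqrt_le_mono[of "(a - c)\<^sup>2 + 4 * b\<^sup>2" "(a + c)\<^sup>2"] by simp
  qed
  also have "\<dots> \<longleftrightarrow> psd2 a b c"
    by (simp add: psd2_def algebra_simps power2_eq_square)
  finally show ?thesis .
qed

lemma psd2_mult_pos_iff:
  assumes "0 < m"
  shows "psd2 (m * a) (m * b) (m * c) \<longleftrightarrow> psd2 a b c"
proof -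
  have "m * a + m * c = m * (a + c)" "(m * b)\<^sup>2 = m\<^sup>2 * b\<^sup>2" "m * a * (m * c) = m\<^sup>2 * (a * c)"
    by (simp_all add: algebra_simps power2_eq_square)
  then have "psd2 (m * a) (m * b) (m * c) \<longleftrightarrow> 0 \<le> m * (a + c) \<and> m\<^sup>2 * b\<^sup>2 \<le> m\<^sup>2 * (a * c)"
    by (simp only: psd2_def)
  also have "\<dots> \<longleftrightarrow> psd2 a b c"
    using assms by (simp add: psd2_def zero_le_mult_iff)
  finally show ?thesis .
qed

lemma psd2_add_rank_one:
  assumes "psd2 a b c"
  shows "psd2 (a + p\<^sup>2) (b + p * q) (c + q\<^sup>2)"
proof -
  have "0 \<le> a * c" "0 \<le> a + c"
    using assms zero_le_power2[of b] unfolding psd2_def by linarith+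
  then have ac: "0 \<le> a" "0 \<le> c"
    by (auto simp: zero_le_mult_iff)
  define X where "X = a * q\<^sup>2 + c * p\<^sup>2"
  have "X\<^sup>2 - (2 * b * p * q)\<^sup>2 = (a * q\<^sup>2 - c * p\<^sup>2)\<^sup>2 + 4 * p\<^sup>2 * q\<^sup>2 * (a * c - b\<^sup>2)"
    unfolding X_def by (simp add: algebra_simps power2_eq_square)
  also have "\<dots> \<ge> 0"
    using assms by (simp add: psd2_def)
  finally have "(2 * b * p * q)\<^sup>2 \<le> X\<^sup>2"
    by simp
  moreover have "0 \<le> X"
    unfolding X_def using ac by simp
  ultimately have cross: "2 * b * p * q \<le> X"
    by (rule power2_le_imp_le)
  have "(a + p\<^sup>2) * (c + q\<^sup>2) - (b + p * q)\<^sup>2 = (a * c - b\<^sup>2) + (X - 2 * b * p * q)"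
    unfolding X_def by (simp add: algebra_simps power2_eq_square)
  then have "(b + p * q)\<^sup>2 \<le> (a + p\<^sup>2) * (c + q\<^sup>2)"
    using cross assms unfolding psd2_def by linarith
  moreover have "0 \<le> (a + p\<^sup>2) + (c + q\<^sup>2)"
    using ac by simp
  ultimately show ?thesis
    unfolding psd2_def by simp
qed

lemma psd2_shifted_diagonal_iff:
  fixes k \<alpha> \<beta> \<gamma> z :: real
  assumes "0 < k" "0 < \<beta>" "z \<le> 1" and det_at_k: "\<gamma>\<^sup>2 \<le> (k + \<alpha>) * \<beta>"
  shows "psd2 (k * z + \<alpha>) \<gamma> (k * (1 - z) + \<beta>)
    \<longleftrightarrow> ((k + \<beta> - \<alpha>) - sqrt ((k + \<alpha> + \<beta>)\<^sup>2 - 4 * \<gamma>\<^sup>2)) / (2 * k) \<le> z"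
proof -
  \<comment> \<open>f w is the determinant at k z = w, a concave quadratic with roots w1 \<le> w2\<close>
  define f where "f w = (w + \<alpha>) * (k + \<beta> - w) - \<gamma>\<^sup>2" for w
  define D where "D = (k + \<alpha> + \<beta>)\<^sup>2 - 4 * \<gamma>\<^sup>2"
  define w1 where "w1 = ((k + \<beta> - \<alpha>) - sqrt D) / 2"
  define w2 where "w2 = ((k + \<beta> - \<alpha>) + sqrt D) / 2"
  have D_eq: "D = (2 * w - (k + \<beta> - \<alpha>))\<^sup>2 + 4 * f w" for w
    unfolding D_def f_def by (simp add: algebra_simps power2_eq_square)
  have "0 \<le> f k"
    using det_at_k by (simp add: f_def)
  then have D_nonneg: "0 \<le> D"
    using D_eq[of k] zero_le_power2[of "2 * k - (k + \<beta> - \<alpha>)"] by linarith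
  then have four_f: "4 * f w = (sqrt D)\<^sup>2 - (2 * w - (k + \<beta> - \<alpha>))\<^sup>2" for w
    using D_eq[of w] by simp
  have f_eq: "f w = (w - w1) * (w2 - w)" for w
    using four_f[of w] unfolding w1_def w2_def by (simp add: field_simps power2_eq_square)
  have "w1 \<le> w2"
    unfolding w1_def w2_def using D_nonneg by simp
  with \<open>0 \<le> f k\<close> have "k \<le> w2"
    unfolding f_eq by (auto simp: zero_le_mult_iff)
  have "0 \<le> (k + \<alpha>) * \<beta>"
    using det_at_k zero_le_power2[of \<gamma>] by linarith
  then have "0 \<le> k + \<alpha>"
    using \<open>0 < \<beta>\<close> by (simp add: zero_le_mult_iff)
  then have trace: "0 \<le> (k * z + \<alpha>) + (k * (1 - z) + \<beta>)"
    using assms(2) by (simp add: algebra_simps)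
  have "psd2 (k * z + \<alpha>) \<gamma> (k * (1 - z) + \<beta>) \<longleftrightarrow> 0 \<le> f (k * z)"
    using trace by (simp add: psd2_def f_def algebra_simps)
  also have "\<dots> \<longleftrightarrow> w1 \<le> k * z"
  proof -
    have "k * z \<le> w2"
      using \<open>k \<le> w2\<close> \<open>0 < k\<close> \<open>z \<le> 1\<close> mult_left_le[of z k] by linarith
    then show ?thesis
      using \<open>w1 \<le> w2\<close> unfolding f_eq by (auto simp: zero_le_mult_iff)
  qed
  also have "\<dots> \<longleftrightarrow> w1 / k \<le> z"
    using \<open>0 < k\<close> by (simp add: divide_le_eq mult.commute)
  finally show ?thesis
    by (simp add: w1_def D_def)
qed

lemma symmetric2_singular_iff:
  fixes a b c :: real
  shows "(\<exists>x y. (x \<noteq> 0 \<or> y \<noteq> 0) \<and> a * x + b * y = 0 \<and> b * x + c * y = 0) \<longleftrightarrow> a * c = b\<^sup>2"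
proof
  assume "\<exists>x y. (x \<noteq> 0 \<or> y \<noteq> 0) \<and> a * x + b * y = 0 \<and> b * x + c * y = 0"
  then obtain x y where nz: "x \<noteq> 0 \<or> y \<noteq> 0" and eq: "a * x + b * y = 0" "b * x + c * y = 0"
    by blast
  have "(a * c - b\<^sup>2) * x = c * (a * x + b * y) - b * (b * x + c * y)"
    "(a * c - b\<^sup>2) * y = a * (b * x + c * y) - b * (a * x + b * y)"
    by (simp_all add: algebra_simps power2_eq_square)
  then show "a * c = b\<^sup>2"
    using nz eq by auto
next
  assume det: "a * c = b\<^sup>2"
  show "\<exists>x y. (x \<noteq> 0 \<or> y \<noteq> 0) \<and> a * x + b * y = 0 \<and> b * x + c * y = 0"
  proof (cases "a = 0 \<and> b = 0")
    case True
    then show ?thesis by (intro exI[of _ 1] exI[of _ 0]) simp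
  next
    case False
    then show ?thesis
      using det by (intro exI[of _ "-b"] exI[of _ a]) (auto simp: algebra_simps power2_eq_square)
  qed
qed

lemma symmetric2_eigenvalue_iff:
  fixes a b c \<mu> :: real
  shows "(a - \<mu>) * (c - \<mu>) = b\<^sup>2 \<longleftrightarrow>
    \<mu> = (a + c + sqrt ((a - c)\<^sup>2 + 4 * b\<^sup>2)) / 2 \<or> \<mu> = (a + c - sqrt ((a - c)\<^sup>2 + 4 * b\<^sup>2)) / 2"
proof -
  define S where "S = sqrt ((a - c)\<^sup>2 + 4 * b\<^sup>2)"
  have "S\<^sup>2 = (a - c)\<^sup>2 + 4 * b\<^sup>2"
    unfolding S_def by simp
  then have "(a - \<mu>) * (c - \<mu>) - b\<^sup>2 = (\<mu> - (a + c + S) / 2) * (\<mu> - (a + c - S) / 2)"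
    by (simp add: field_simps power2_eq_square)
  then have "(a - \<mu>) * (c - \<mu>) = b\<^sup>2 \<longleftrightarrow> (\<mu> - (a + c + S) / 2) * (\<mu> - (a + c - S) / 2) = 0"
    by (simp only: eq_iff_diff_eq_0[of "(a - \<mu>) * (c - \<mu>)"])
  then show ?thesis
    unfolding S_def[symmetric] by simp
qed

(* The quadratic forms on R^4 invariant under swapping (x1, x2) with (x3, x4); B_1 is one of them. *)
definition bisym_form :: "real \<Rightarrow> real \<Rightarrow> real \<Rightarrow> real \<Rightarrow> real \<Rightarrow> real \<Rightarrow> real^4 \<Rightarrow> real" where
  "bisym_form a b c s e h x =
     a * ((x$1)\<^sup>2 + (x$3)\<^sup>2) + c * ((x$2)\<^sup>2 + (x$4)\<^sup>2) + 2 * b * (x$1 * x$2 + x$3 * x$4)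
     + 2 * s * (x$1 * x$3) + 2 * e * (x$1 * x$4 + x$2 * x$3) + 2 * h * (x$2 * x$4)"

lemma quad_matrix_bisym_form_mult:
  fixes a b c s e h :: real and v :: "real^4"
  defines "M \<equiv> quad_matrix (bisym_form a b c s e h)"
  shows "(M *v v)$1 = a * v$1 + b * v$2 + s * v$3 + e * v$4"
    and "(M *v v)$2 = b * v$1 + c * v$2 + e * v$3 + h * v$4"
    and "(M *v v)$3 = s * v$1 + e * v$2 + a * v$3 + b * v$4"
    and "(M *v v)$4 = e * v$1 + h * v$2 + b * v$3 + c * v$4"
  unfolding M_def
  by (simp_all add: matrix_vector_mult_def sum_4 quad_matrix_def bisym_form_def axis_def
      power2_eq_square algebra_simps)

lemma is_eigenvalue_bisym_formI:
  assumes "\<sigma> = 1 \<or> \<sigma> = -1" "x \<noteq> 0 \<or> y \<noteq> 0"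
    and "(a + \<sigma> * s - \<mu>) * x + (b + \<sigma> * e) * y = 0" "(b + \<sigma> * e) * x + (c + \<sigma> * h - \<mu>) * y = 0"
  shows "is_eigenvalue (quad_matrix (bisym_form a b c s e h)) \<mu>"
proof -
  define v :: "real^4" where
    "v = (\<chi> i. if i = 1 then x else if i = 2 then y else if i = 3 then \<sigma> * x else \<sigma> * y)"
  have v: "v$1 = x" "v$2 = y" "v$3 = \<sigma> * x" "v$4 = \<sigma> * y"
    by (simp_all add: v_def)
  have "v \<noteq> 0"
    using assms(2) v by (auto simp: vec_eq_iff)
  moreover have "(quad_matrix (bisym_form a b c s e h) *v v)$i = (\<mu> *\<^sub>R v)$i" for i
    using exhaust_4[of i] assms(1,3,4)
    by (auto simp: quad_matrix_bisym_form_mult v algebra_simps)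
  then have "quad_matrix (bisym_form a b c s e h) *v v = \<mu> *\<^sub>R v"
    by (simp add: vec_eq_iff)
  ultimately show ?thesis
    unfolding is_eigenvalue_def by blast
qed

lemma is_eigenvalue_bisym_form_iff:
  "is_eigenvalue (quad_matrix (bisym_form a b c s e h)) \<mu> \<longleftrightarrow>
     (a + s - \<mu>) * (c + h - \<mu>) = (b + e)\<^sup>2 \<or> (a - s - \<mu>) * (c - h - \<mu>) = (b - e)\<^sup>2"
proof -
  let ?M = "quad_matrix (bisym_form a b c s e h)"
  let ?kernel = "\<lambda>p r q. \<exists>x y. (x \<noteq> 0 \<or> y \<noteq> 0) \<and> (p - \<mu>) * x + r * y = 0 \<and> r * x + (q - \<mu>) * y = 0"
  have "is_eigenvalue ?M \<mu> \<longleftrightarrow> ?kernel (a + s) (b + e) (c + h) \<or> ?kernel (a - s) (b - e) (c - h)"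
  proof
    assume "is_eigenvalue ?M \<mu>"
    then obtain v where "v \<noteq> 0" and ev: "?M *v v = \<mu> *\<^sub>R v"
      unfolding is_eigenvalue_def by blast
    have "(?M *v v)$i = \<mu> * v$i" for i
      using ev by simp
    note eqs = this[of 1] this[of 2] this[of 3] this[of 4]
    have even: "(a + s - \<mu>) * (v$1 + v$3) + (b + e) * (v$2 + v$4) = 0"
        "(b + e) * (v$1 + v$3) + (c + h - \<mu>) * (v$2 + v$4) = 0"
      and odd: "(a - s - \<mu>) * (v$1 - v$3) + (b - e) * (v$2 - v$4) = 0"
        "(b - e) * (v$1 - v$3) + (c - h - \<mu>) * (v$2 - v$4) = 0"
      using eqs by (simp_all add: quad_matrix_bisym_form_mult algebra_simps)
    have "v$1 + v$3 \<noteq> 0 \<or> v$2 + v$4 \<noteq> 0 \<or> v$1 - v$3 \<noteq> 0 \<or> v$2 - v$4 \<noteq> 0"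
      using \<open>v \<noteq> 0\<close> by (auto simp: vec_eq_iff forall_4)
    then show "?kernel (a + s) (b + e) (c + h) \<or> ?kernel (a - s) (b - e) (c - h)"
      using even odd by blast
  next
    assume "?kernel (a + s) (b + e) (c + h) \<or> ?kernel (a - s) (b - e) (c - h)"
    then show "is_eigenvalue ?M \<mu>"
    proof
      assume "?kernel (a + s) (b + e) (c + h)"
      then obtain x y where "x \<noteq> 0 \<or> y \<noteq> 0" "(a + s - \<mu>) * x + (b + e) * y = 0"
        "(b + e) * x + (c + h - \<mu>) * y = 0"
        by blast
      then show ?thesis
        using is_eigenvalue_bisym_formI[of 1 x y] by simp
    next
      assume "?kernel (a - s) (b - e) (c - h)"
      then obtain x y where "x \<noteq> 0 \<or> y \<noteq> 0" "(a - s - \<mu>) * x + (b - e) * y = 0"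
        "(b - e) * x + (c - h - \<mu>) * y = 0"
        by blast
      then show ?thesis
        using is_eigenvalue_bisym_formI[of "-1" x y] by simp
    qed
  qed
  then show ?thesis
    unfolding symmetric2_singular_iff .
qed

lemma smallest_eigenvalue_bisym_form_nonneg_iff:
  "0 \<le> smallest_eigenvalue (quad_matrix (bisym_form a b c s e h)) \<longleftrightarrow>
     psd2 (a + s) (b + e) (c + h) \<and> psd2 (a - s) (b - e) (c - h)"
proof -
  define r1 where "r1 = sqrt ((a + s - (c + h))\<^sup>2 + 4 * (b + e)\<^sup>2)"
  define r2 where "r2 = sqrt ((a - s - (c - h))\<^sup>2 + 4 * (b - e)\<^sup>2)"
  have "{\<mu>. is_eigenvalue (quad_matrix (bisym_form a b c s e h)) \<mu>}
      = {(a + s + (c + h) + r1) / 2, (a + s + (c + h) - r1) / 2,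
         (a - s + (c - h) + r2) / 2, (a - s + (c - h) - r2) / 2}"
    unfolding is_eigenvalue_bisym_form_iff symmetric2_eigenvalue_iff r1_def[symmetric] r2_def[symmetric]
    by auto
  moreover have "0 \<le> r1" "0 \<le> r2"
    by (simp_all add: r1_def r2_def)
  ultimately have "0 \<le> smallest_eigenvalue (quad_matrix (bisym_form a b c s e h)) \<longleftrightarrow>
      0 \<le> (a + s + (c + h) - r1) / 2 \<and> 0 \<le> (a - s + (c - h) - r2) / 2"
    unfolding smallest_eigenvalue_def by auto
  then show ?thesis
    unfolding r1_def r2_def psd2_iff_smaller_root_nonneg .
qed

lemma smallest_eigenvalue_nonneg_iff_odd_block:
  fixes m A C u :: real
  assumes "0 < m"
  shows "0 \<le> smallest_eigenvalue (quad_matrix (bisym_form (m * A) (- m * u) (m * C)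
            (2 * m * u\<^sup>2) (- m * u ^ 3) (m * u ^ 4 / 2)))
    \<longleftrightarrow> psd2 (A - 2 * u\<^sup>2) (u ^ 3 - u) (C - u ^ 4 / 2)"
proof -
  have "0 \<le> smallest_eigenvalue (quad_matrix (bisym_form (m * A) (- m * u) (m * C)
            (2 * m * u\<^sup>2) (- m * u ^ 3) (m * u ^ 4 / 2))) \<longleftrightarrow>
      psd2 (m * (A + 2 * u\<^sup>2)) (m * (- u - u ^ 3)) (m * (C + u ^ 4 / 2))
      \<and> psd2 (m * (A - 2 * u\<^sup>2)) (m * (u ^ 3 - u)) (m * (C - u ^ 4 / 2))"
    unfolding smallest_eigenvalue_bisym_form_nonneg_iff by (simp add: algebra_simps)
  also have "\<dots> \<longleftrightarrow> psd2 (A + 2 * u\<^sup>2) (- u - u ^ 3) (C + u ^ 4 / 2)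
      \<and> psd2 (A - 2 * u\<^sup>2) (u ^ 3 - u) (C - u ^ 4 / 2)"
    unfolding psd2_mult_pos_iff[OF \<open>0 < m\<close>] ..
  also have "\<dots> \<longleftrightarrow> psd2 (A - 2 * u\<^sup>2) (u ^ 3 - u) (C - u ^ 4 / 2)"
    \<comment> \<open>the even block is the odd block plus v v^T with v = (2 u, - u^2)\<close>
    using psd2_add_rank_one[of "A - 2 * u\<^sup>2" "u ^ 3 - u" "C - u ^ 4 / 2" "2 * u" "- u\<^sup>2"]
    by (auto simp: algebra_simps power2_eq_square power3_eq_cube power4_eq_xxxx)
  finally show ?thesis .
qed

lemma tanh_real_has_derivative:
  fixes x :: real
  shows "(tanh has_real_derivative 1 - tanh x ^ 2) (at x)"
  using has_field_derivative_tanh[OF cosh_real_pos[THEN less_imp_neq, THEN not_sym] DERIV_ident]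
  by simp

lemma tanh_le_self:
  fixes t :: real
  assumes "0 \<le> t"
  shows "tanh t \<le> t"
proof -
  let ?g = "\<lambda>x. x - tanh x"
  have "((\<lambda>x. x - tanh x) has_real_derivative 1 - (1 - tanh x ^ 2)) (at x)" for x :: real
    by (intro DERIV_diff DERIV_ident tanh_real_has_derivative)
  then have "?g 0 \<le> ?g t"
    by (rule deriv_nonneg_imp_mono[where g = ?g]) (simp_all add: assms)
  then show ?thesis
    by simp
qed

lemma tanh_ge_cubic:
  fixes t :: real
  assumes "0 \<le> t"
  shows "t - t ^ 3 / 3 \<le> tanh t"
proof -
  let ?g = "\<lambda>x. tanh x - x + x ^ 3 / 3"
  let ?g' = "\<lambda>x. (1 - tanh x ^ 2) - 1 + real 3 * x ^ (3 - Suc 0) / 3"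
  have "?g 0 \<le> ?g t"
  proof (rule deriv_nonneg_imp_mono[where g = ?g and g' = ?g'])
    show "(?g has_real_derivative ?g' x) (at x)" for x
      by (intro DERIV_add DERIV_diff DERIV_ident DERIV_cdivide DERIV_pow tanh_real_has_derivative)
    show "0 \<le> ?g' x" if "x \<in> {0..t}" for x
    proof -
      have "tanh x ^ 2 \<le> x ^ 2"
        using tanh_le_self that by (intro power_mono) simp_all
      then show ?thesis
        by simp
    qed
  qed (use assms in simp)
  then show ?thesis
    by simp
qed

lemma odd_block_det_at_one_nonneg:
  fixes t :: real
  assumes "0 < t"
  defines "u \<equiv> exp (- t)"
  shows "(u ^ 3 - u)\<^sup>2 \<le> (2/3 * t^3 + 2 - 2 * t - 2 * u\<^sup>2) * ((1 - u ^ 4) / 2)"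
proof -
  have "0 < u" "u < 1"
    using \<open>0 < t\<close> by (simp_all add: u_def)
  then have "u ^ 4 < 1"
    using power_less_one_iff[of u 4] by simp
  have "1 + u\<^sup>2 \<noteq> 0"
    using zero_le_power2[of u] by linarith
  moreover have "exp (- 2 * t) = u\<^sup>2"
    unfolding u_def using exp_double[of "- t"] by simp
  ultimately have tanh_eq: "(1 + u\<^sup>2) * tanh t = 1 - u\<^sup>2"
    unfolding tanh_real_altdef by simp
  have "(1 + u\<^sup>2) * ((2/3 * t^3 + 2 - 2 * t - 2 * u\<^sup>2) * ((1 - u ^ 4) / 2) - (u ^ 3 - u)\<^sup>2)
      = (1 - u ^ 4) * ((1 + u\<^sup>2) * tanh t - (1 + u\<^sup>2) * (t - t ^ 3 / 3))"
    unfolding tanh_eq by (simp add: field_simps power2_eq_square power3_eq_cube power4_eq_xxxx)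
  also have "\<dots> = (1 + u\<^sup>2) * ((1 - u ^ 4) * (tanh t - (t - t ^ 3 / 3)))"
    by (simp add: algebra_simps)
  finally have "(2/3 * t^3 + 2 - 2 * t - 2 * u\<^sup>2) * ((1 - u ^ 4) / 2) - (u ^ 3 - u)\<^sup>2
      = (1 - u ^ 4) * (tanh t - (t - t ^ 3 / 3))"
    using \<open>1 + u\<^sup>2 \<noteq> 0\<close> by simp
  also have "\<dots> \<ge> 0"
    using tanh_ge_cubic[of t] \<open>0 < t\<close> \<open>u ^ 4 < 1\<close> by simp
  finally show ?thesis
    by simp
qed

lemma odd_block_psd_iff:
  fixes t z :: real
  assumes "0 < t" "z \<le> 1"
  defines "u \<equiv> exp (- t)"
  shows "psd2 (2/3 * t^3 * z + 2 - 2 * t - 2 * u\<^sup>2) (u ^ 3 - u) (2/3 * t^3 * (1 - z) + 1/2 - u ^ 4 / 2)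
    \<longleftrightarrow> zeta1 u \<le> z"
proof -
  define k \<alpha> \<beta> where "k = 2/3 * t^3" and "\<alpha> = 2 - 2 * t - 2 * u\<^sup>2" and "\<beta> = (1 - u ^ 4) / 2"
  have "0 < u" "u < 1"
    using \<open>0 < t\<close> by (simp_all add: u_def)
  then have "0 < k" "0 < \<beta>"
    using \<open>0 < t\<close> power_less_one_iff[of u 4] by (simp_all add: k_def \<beta>_def)
  have det_at_one: "(u ^ 3 - u)\<^sup>2 \<le> (k + \<alpha>) * \<beta>"
    using odd_block_det_at_one_nonneg[OF \<open>0 < t\<close>]
    unfolding k_def \<alpha>_def \<beta>_def u_def by (simp add: algebra_simps)
  define D where "D = (k + \<alpha> + \<beta>)\<^sup>2 - 4 * (u ^ 3 - u)\<^sup>2"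
  have "ln u = - t"
    by (simp add: u_def)
  then have "R_fun u = 36 * D"
    unfolding R_fun_def Let_def D_def k_def \<alpha>_def \<beta>_def by (simp add: field_simps eval_nat_numeral)
  then have "sqrt (R_fun u) = 6 * sqrt D"
    by (simp add: real_sqrt_mult)
  then have zeta1_eq: "zeta1 u = ((k + \<beta> - \<alpha>) - sqrt D) / (2 * k)"
    unfolding zeta1_def Let_def \<open>ln u = - t\<close> k_def \<alpha>_def \<beta>_def using \<open>0 < t\<close>
    by (simp add: field_simps power2_eq_square power3_eq_cube power4_eq_xxxx)
  have blocks: "2/3 * t^3 * z + 2 - 2 * t - 2 * u\<^sup>2 = k * z + \<alpha>"
    "2/3 * t^3 * (1 - z) + 1/2 - u ^ 4 / 2 = k * (1 - z) + \<beta>"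
    by (simp_all add: k_def \<alpha>_def \<beta>_def field_simps)
  show ?thesis
    unfolding blocks zeta1_eq D_def
    by (rule psd2_shifted_diagonal_iff[OF \<open>0 < k\<close> \<open>0 < \<beta>\<close> \<open>z \<le> 1\<close> det_at_one])
qed

lemma B1_eq_bisym_form:
  fixes c0 cu cv L :: real
  assumes "0 < L" "0 < c0 + cu + 2 * cv"
  defines "t \<equiv> 2 * pi * delta_b c0 cu cv / L" and "m \<equiv> L / pi"
    and "z \<equiv> (cu + cv) / ((cu + cv) + (cv + c0))"
  shows "B1 c0 cu cv L = bisym_form (m * (2/3 * t^3 * z + 2 - 2 * t)) (- m * exp (- t))
           (m * (2/3 * t^3 * (1 - z) + 1/2)) (2 * m * (exp (- t))\<^sup>2) (- m * exp (- t) ^ 3)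
           (m * exp (- t) ^ 4 / 2)"
proof -
  define u where "u = exp (- t)"
  define S where "S = c0 + cu + 2 * cv"
  have "0 < 3/4 * S"
    using assms(2) by (simp add: S_def)
  then have "delta_b c0 cu cv ^ 3 = 3/4 * S"
    unfolding delta_b_def S_def by (simp flip: powr_realpow add: powr_powr)
  then have cubic: "m * (2/3 * t^3) = 4 * pi\<^sup>2 / L\<^sup>2 * S"
    unfolding m_def t_def using \<open>0 < L\<close>
    by (simp add: power_mult_distrib power_divide field_simps power2_eq_square power3_eq_cube)
  have "z * S = cu + cv" "(1 - z) * S = cv + c0"
    unfolding z_def S_def using assms(2) by (simp_all add: field_simps)
  then have even: "4 * pi\<^sup>2 / L\<^sup>2 * (cu + cv) = m * (2/3 * t^3) * z"
    and odd: "4 * pi\<^sup>2 / L\<^sup>2 * (cv + c0) = m * (2/3 * t^3) * (1 - z)"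
    unfolding cubic by (simp_all flip: \<open>z * S = cu + cv\<close> \<open>(1 - z) * S = cv + c0\<close>)
  have linear: "L / pi * (2 * (1 - 2 * pi * delta_b c0 cu cv / L)) = m * (2 - 2 * t)"
    using \<open>0 < L\<close> by (simp add: m_def t_def field_simps)
  have diag: "4 * pi\<^sup>2 / L\<^sup>2 * (cu + cv) + L / pi * (2 * (1 - 2 * pi * delta_b c0 cu cv / L))
      = m * (2/3 * t^3 * z + 2 - 2 * t)"
    "4 * pi\<^sup>2 / L\<^sup>2 * (cv + c0) + L / pi * (1/2) = m * (2/3 * t^3 * (1 - z) + 1/2)"
    unfolding even odd linear by (simp_all add: m_def field_simps)
  have "exp (- (real n * t)) = u ^ n" for n
    unfolding u_def by (simp flip: exp_of_nat_mult)
  from this[of 1] this[of 2] this[of 3] this[of 4]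
  have "exp (-2 * pi * delta_b c0 cu cv / L) = u" "exp (-4 * pi * delta_b c0 cu cv / L) = u\<^sup>2"
    "exp (-6 * pi * delta_b c0 cu cv / L) = u ^ 3" "exp (-8 * pi * delta_b c0 cu cv / L) = u ^ 4"
    by (simp_all add: t_def mult.assoc)
  then show ?thesis
    unfolding diag[symmetric] u_def[symmetric]
    by (simp add: fun_eq_iff B1_def bisym_form_def Let_def m_def field_simps)
qed

lemma continuous_extension_zeta1:
  "\<exists>g. continuous_on {0..1} g \<and> (\<forall>u\<in>{0<..<1}. g u = zeta1 u)"
proof -
  define c where "c = - (((1104 / 5) powr (1 / 2) - 20) / 8 :: real)"
  have lim0: "(zeta1 \<longlongrightarrow> 0) (at_right 0)"
    unfolding zeta1_def R_fun_def Let_def by real_asymp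
  have lim1: "(zeta1 \<longlongrightarrow> c) (at_left 1)"
    unfolding zeta1_def R_fun_def Let_def c_def by real_asymp
  define g where "g u = (if u = 0 then 0 else if u = 1 then c else zeta1 u)" for u
  have cong: "(zeta1 \<longlongrightarrow> l) F \<longleftrightarrow> (g \<longlongrightarrow> l) F" if "eventually (\<lambda>x. x \<in> {0<..<1}) F" for l F
    by (rule tendsto_cong) (use that in eventually_elim, simp add: g_def)
  have "continuous_on {0..1} g"
  proof (rule continuous_on_IccI)
    show "(g \<longlongrightarrow> g 0) (at_right 0)"
      using lim0 cong[OF eventually_at_right_real[OF zero_less_one]] by (simp add: g_def)
    show "(g \<longlongrightarrow> g 1) (at_left 1)"
      using lim1 cong[OF eventually_at_left_real[OF zero_less_one]] by (simp add: g_def)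
  next
    fix x :: real
    assume "0 < x" "x < 1"
    then have "isCont zeta1 x"
      unfolding zeta1_def R_fun_def Let_def by (intro continuous_intros) auto
    moreover have "eventually (\<lambda>y. y \<in> {0<..<1}) (at x)"
      using \<open>0 < x\<close> \<open>x < 1\<close> by (intro eventually_at_in_open') auto
    ultimately show "(g \<longlongrightarrow> g x) (at x)"
      using cong \<open>0 < x\<close> \<open>x < 1\<close> by (simp add: g_def isCont_def)
  qed simp
  then show ?thesis
    by (auto simp: g_def)
qed

theorem lemma4p5:
  fixes L c0 cu cv :: real
  assumes "L > 0" and "c0 \<ge> 0" and "cu \<ge> 0" and "cv \<ge> 0"
    and "\<not> (c0 = 0 \<and> cu = 0 \<and> cv = 0)"
  shows "(smallest_eigenvalue (quad_matrix (B1 c0 cu cv L)) \<ge> 0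
            \<longleftrightarrow> (cu + cv) / ((cu + cv) + (cv + c0))
                  \<ge> zeta1 (exp (- 2 * pi * delta_b c0 cu cv / L)))
         \<and> (\<exists>g. continuous_on {0..1} g \<and> (\<forall>u\<in>{0<..<1}. g u = zeta1 u))"
proof (rule conjI[OF _ continuous_extension_zeta1])
  define t where "t = 2 * pi * delta_b c0 cu cv / L"
  define z where "z = (cu + cv) / ((cu + cv) + (cv + c0))"
  have "0 < c0 + cu + 2 * cv"
    using assms by auto
  then have "0 < t"
    using \<open>0 < L\<close> by (simp add: t_def delta_b_def)
  have "z \<le> 1"
    using \<open>0 < c0 + cu + 2 * cv\<close> \<open>0 \<le> c0\<close> \<open>0 \<le> cv\<close> by (simp add: z_def divide_le_eq_1)
  have "0 \<le> smallest_eigenvalue (quad_matrix (B1 c0 cu cv L))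
      \<longleftrightarrow> psd2 (2/3 * t^3 * z + 2 - 2 * t - 2 * (exp (- t))\<^sup>2) (exp (- t) ^ 3 - exp (- t))
            (2/3 * t^3 * (1 - z) + 1/2 - exp (- t) ^ 4 / 2)"
    unfolding B1_eq_bisym_form[OF \<open>0 < L\<close> \<open>0 < c0 + cu + 2 * cv\<close>] t_def[symmetric] z_def[symmetric]
    by (rule smallest_eigenvalue_nonneg_iff_odd_block) (simp add: \<open>0 < L\<close>)
  also have "\<dots> \<longleftrightarrow> zeta1 (exp (- t)) \<le> z"
    by (rule odd_block_psd_iff[OF \<open>0 < t\<close> \<open>z \<le> 1\<close>])
  finally show "0 \<le> smallest_eigenvalue (quad_matrix (B1 c0 cu cv L)) \<longleftrightarrow>
      zeta1 (exp (- 2 * pi * delta_b c0 cu cv / L)) \<le> (cu + cv) / ((cu + cv) + (cv + c0))"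
    by (simp add: t_def z_def)
qed

end
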